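(* Let $d\geq 7$. There exists no smooth function $f:[0,\infty)\to\mathbb{R}$ solving $$f''(y)+\left(\frac{d-1}{y}-\frac{y}{2}\right)f'(y)-\frac{d-1}{2y^2}\sin(2f(y))=0\quad\text{for all } y>0$$ and satisfying both of the following conditions: (i) $f(0)=0$ and $f'(0)=a$ for some $a>0$; (ii) $\lim_{y\to\infty}f(y)=b$ for some $b\in\mathbb{R}$, and $\lim_{y\to\infty}y^3f'(y)=-(d-1)\sin(2b)$.
   Context: The equation is the ordinary differential equation for self-similar shrinking solutions $v(t,r)=f(r/\sqrt{-t})$, $t<0$, of the equivariant harmonic map heat flow $v_t=v_{rr}+\frac{d-1}{r}v_r-\frac{d-1}{2r^2}\sin(2v)$ from $\mathbb{R}^d$ to $S^d$. Here "smooth" means $f\in C^\infty([0,\infty))$. *)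

theory Defs
  imports "HOL-Analysis.Analysis"
begin

definition smooth_on_halfline :: "(real \<Rightarrow> real) \<Rightarrow> bool" where
  "smooth_on_halfline f \<longleftrightarrow>
     (\<exists>D :: nat \<Rightarrow> real \<Rightarrow> real. D 0 = f \<and>
        (\<forall>n. \<forall>y\<ge>0. (D n has_real_derivative D (Suc n) y) (at y within {0..})))"

end

theory Submission
  imports Defs "HOL-Real_Asymp.Real_Asymp"
begin

(*
  Let w y = y^(d-1) exp(-y^2/4). The equation says (w f')' = w (d-1)/(2 y^2) sin (2 f), so w f'
  increases as long as 0 < f < pi/2; since w f' vanishes at 0 and at infinity, f must reach the
  equator pi/2, first at y1 say.
  With g = f - pi/2 and v y = 1/y^2 - 1/(2d-8), the functional W = w (f' v + 2 g / y^3) satisfies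
  W' = (w v / y^2) ((2d-8) g - (d-1)/2 sin (2 g)), whose last factor has the sign of g when d >= 7.
  So W decreases wherever v and g have opposite signs, and W = w f' v on the equator.
  If v y1 >= 0 this gives W y1 < W (0+) = 0 <= W y1. If v y1 < 0, backward uniqueness of the
  equilibrium pi/2 gives f' y1 > 0, so W y1 < 0, and W keeps decreasing while f > pi/2: either up
  to a return to the equator, where W >= 0, or up to infinity, where W tends to 0.
*)

lemma first_crossing:
  fixes h :: "real \<Rightarrow> real"
  assumes "a < b" "continuous_on {a..b} h" "h a < c" "c \<le> h b"
  obtains z where "a < z" "z \<le> b" "h z = c" "\<And>x. a \<le> x \<Longrightarrow> x < z \<Longrightarrow> h x < c"
proof -
  define S where "S = {a..b} \<inter> h -` {c..}"
  have "closed S"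
    unfolding S_def by (rule continuous_closed_preimage[OF assms(2)]) auto
  moreover have "b \<in> S" "bdd_below S"
    using assms unfolding S_def by (auto intro: bdd_belowI[of _ a])
  ultimately have zS: "Inf S \<in> S"
    by (intro closed_contains_Inf) auto
  have below: "h x < c" if "a \<le> x" "x < Inf S" for x
    using that zS cInf_lower[OF _ \<open>bdd_below S\<close>, of x] unfolding S_def by force
  have "a \<noteq> Inf S"
    using zS assms(3) unfolding S_def by auto
  then have "a < Inf S" "Inf S \<le> b" "c \<le> h (Inf S)"
    using zS unfolding S_def by auto
  moreover have "h (Inf S) \<le> c"
  proof (rule ccontr)
    assume "\<not> h (Inf S) \<le> c"
    then obtain x where "a \<le> x" "x \<le> Inf S" "h x = c"
      using IVT'[of h a c "Inf S"] assms \<open>a < Inf S\<close> \<open>Inf S \<le> b\<close>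
        continuous_on_subset[OF assms(2)] by force
    then show False
      using below[of x] \<open>\<not> h (Inf S) \<le> c\<close> by (cases "x = Inf S") auto
  qed
  ultimately show ?thesis
    using below that by auto
qed

lemma sin_less_self:
  fixes x :: real
  assumes "0 < x"
  shows "sin x < x"
proof (cases "x \<le> 1")
  case True
  have "(\<lambda>x. x - sin x) 0 < (\<lambda>x. x - sin x) x"
  proof (rule DERIV_pos_imp_increasing_open[OF assms])
    fix u assume "0 < u" "u < x"
    then have "cos u < cos 0"
      using True pi_gt3 by (intro cos_monotone_0_pi) auto
    then show "\<exists>D. ((\<lambda>x. x - sin x) has_real_derivative D) (at u) \<and> 0 < D"
      by (intro exI[of _ "1 - cos u"]) (auto intro!: derivative_eq_intros)
  qed (intro continuous_intros)
  then show ?thesis by simp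
next
  case False
  then show ?thesis
    using sin_le_one[of x] by linarith
qed

lemma scaled_sin_less:
  fixes a c x :: real
  assumes "0 \<le> c" "c \<le> a" "0 < a" "0 < x"
  shows "c * sin x < a * x"
proof (cases "c = 0")
  case False
  then have "c * sin x < c * x"
    using assms sin_less_self by simp
  also have "\<dots> \<le> a * x"
    using assms by (intro mult_right_mono) auto
  finally show ?thesis .
qed (use assms in simp)

lemma DERIV_nonneg_if_less_on_left:
  fixes h :: "real \<Rightarrow> real"
  assumes "(h has_real_derivative D) (at z)" "a < z" "\<And>x. a \<le> x \<Longrightarrow> x < z \<Longrightarrow> h x < h z"
  shows "0 \<le> D"
proof (rule ccontr)
  assume "\<not> 0 \<le> D"
  then obtain e where "0 < e" and dec: "\<And>t. 0 < t \<Longrightarrow> t < e \<Longrightarrow> h z < h (z - t)"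
    using DERIV_neg_dec_left[OF assms(1)] by force
  define t where "t = min e (z - a) / 2"
  have "0 < t" "t < e" "a \<le> z - t"
    using \<open>0 < e\<close> assms(2) unfolding t_def by (auto simp: min_def field_simps)
  then show False
    using dec[of t] assms(3)[of "z - t"] by simp
qed

lemma DERIV_nonpos_if_greater_on_left:
  fixes h :: "real \<Rightarrow> real"
  assumes "(h has_real_derivative D) (at z)" "a < z" "\<And>x. a \<le> x \<Longrightarrow> x < z \<Longrightarrow> h z < h x"
  shows "D \<le> 0"
  using DERIV_nonneg_if_less_on_left[OF DERIV_minus[OF assms(1)] assms(2)] assms(3) by force

lemma eventually_greater_at_right_if_pos_derivative:
  fixes h :: "real \<Rightarrow> real"
  assumes "(h has_real_derivative D) (at_right x)" "0 < D"
  shows "\<forall>\<^sub>F y in at_right x. h x < h y"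
proof -
  obtain e where "0 < e" and inc: "\<And>t. 0 < t \<Longrightarrow> t < e \<Longrightarrow> h x < h (x + t)"
    using has_real_derivative_pos_inc_right[OF assms] by force
  then show ?thesis
    unfolding eventually_at_right_field
  proof (intro exI[of _ "x + e"] conjI allI impI)
    fix y assume "x < y" "y < x + e"
    then show "h x < h y"
      using inc[of "y - x"] by simp
  qed (use \<open>0 < e\<close> in simp)
qed

lemma greater_than_limit_at_right_if_increasing:
  fixes g :: "real \<Rightarrow> real"
  assumes "(g \<longlongrightarrow> l) (at_right a)" "a < x"
    and "\<And>s t. a < s \<Longrightarrow> s < t \<Longrightarrow> t \<le> x \<Longrightarrow> g s < g t"
  shows "l < g x"
proof -
  let ?m = "(a + x) / 2"
  have "l \<le> g ?m"
  proof (rule tendsto_upperbound[OF assms(1)])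
    show "\<forall>\<^sub>F t in at_right a. g t \<le> g ?m"
      unfolding eventually_at_right_field using assms(2,3)
      by (intro exI[of _ ?m]) (auto intro: less_imp_le)
  qed simp
  also have "g ?m < g x"
    using assms(2,3) by simp
  finally show ?thesis .
qed

lemma less_than_limit_at_top_if_increasing:
  fixes g :: "real \<Rightarrow> real"
  assumes "(g \<longlongrightarrow> l) at_top" "\<And>s t. x \<le> s \<Longrightarrow> s < t \<Longrightarrow> g s < g t"
  shows "g x < l"
proof -
  have "g x < g (x + 1)"
    using assms(2) by simp
  also have "g (x + 1) \<le> l"
  proof (rule tendsto_lowerbound[OF assms(1)])
    show "\<forall>\<^sub>F t in at_top. g (x + 1) \<le> g t"
      using eventually_gt_at_top[of "x + 1"] by eventually_elim (simp add: less_imp_le assms(2))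
  qed simp
  finally show ?thesis .
qed

lemma backward_gronwall_nonpos:
  fixes E E' :: "real \<Rightarrow> real"
  assumes "a \<le> b"
    and "\<And>y. a \<le> y \<Longrightarrow> y \<le> b \<Longrightarrow> (E has_real_derivative E' y) (at y)"
    and "\<And>y. a \<le> y \<Longrightarrow> y \<le> b \<Longrightarrow> - K * E y \<le> E' y"
    and "E b \<le> 0"
  shows "E a \<le> 0"
proof -
  have "E a * exp (K * a) \<le> E b * exp (K * b)"
  proof (rule DERIV_nonneg_imp_nondecreasing[OF assms(1)])
    fix y assume y: "a \<le> y" "y \<le> b"
    have "((\<lambda>y. E y * exp (K * y)) has_real_derivative (E' y + K * E y) * exp (K * y)) (at y)"
      by (auto intro!: derivative_eq_intros assms(2)[OF y] simp: algebra_simps)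
    moreover have "0 \<le> (E' y + K * E y) * exp (K * y)"
      using assms(3)[OF y] by simp
    ultimately show "\<exists>D. ((\<lambda>y. E y * exp (K * y)) has_real_derivative D) (at y) \<and> 0 \<le> D"
      by blast
  qed
  also have "\<dots> \<le> 0"
    using assms(4) by (simp add: mult_nonpos_nonneg)
  finally show ?thesis
    by (simp add: mult_le_0_iff)
qed

lemma smooth_on_halfline_derivatives:
  assumes "smooth_on_halfline f"
  obtains f' f'' where "continuous_on {0..} f" "continuous_on {0..} f'"
    "\<And>y. 0 < y \<Longrightarrow> (f has_real_derivative f' y) (at y)"
    "\<And>y. 0 < y \<Longrightarrow> (f' has_real_derivative f'' y) (at y)"
    "\<And>y. 0 < y \<Longrightarrow> deriv f y = f' y"
    "\<And>y. 0 < y \<Longrightarrow> deriv (deriv f) y = f'' y"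
proof -
  obtain D where "D 0 = f"
    and D: "\<And>n y. 0 \<le> y \<Longrightarrow> (D n has_real_derivative D (Suc n) y) (at y within {0..})"
    using assms unfolding smooth_on_halfline_def by blast
  have cont: "continuous_on {0..} (D n)" for n
    using D by (auto simp: continuous_on_eq_continuous_within intro: DERIV_continuous)
  have D_at: "(D n has_real_derivative D (Suc n) y) (at y)" if "0 < y" for n y
    using D[of y n] that at_within_interior[of y "{0..}"] by simp
  have f_deriv: "(f has_real_derivative D 1 y) (at y)" if "0 < y" for y
    using D_at[OF that, of 0] \<open>D 0 = f\<close> by simp
  have f'_deriv: "(D 1 has_real_derivative D 2 y) (at y)" if "0 < y" for y
    using D_at[OF that, of 1] by (simp add: numeral_2_eq_2)
  have deriv_f: "deriv f y = D 1 y" if "0 < y" for y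
    using f_deriv[OF that] by (rule DERIV_imp_deriv)
  have "deriv (deriv f) y = D 2 y" if "0 < y" for y
  proof (rule DERIV_imp_deriv)
    show "(deriv f has_real_derivative D 2 y) (at y)"
      by (rule has_field_derivative_transform_within_open[OF f'_deriv[OF that], of "{0<..}"])
        (use that deriv_f in auto)
  qed
  then show ?thesis
    using that cont[of 0] cont[of 1] f_deriv f'_deriv deriv_f \<open>D 0 = f\<close> by blast
qed

lemma continuous_on_halfline_tendsto_at_right:
  "continuous_on {0..} g \<Longrightarrow> (g \<longlongrightarrow> g 0) (at_right (0::real))"
  by (auto simp: continuous_on_def intro: tendsto_within_subset)

locale shrinker_ode =
  fixes d :: nat and f f' f'' :: "real \<Rightarrow> real"
  assumes dim: "7 \<le> d"
    and cont_f: "continuous_on {0..} f"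
    and cont_f': "continuous_on {0..} f'"
    and f_deriv: "\<And>y. 0 < y \<Longrightarrow> (f has_real_derivative f' y) (at y)"
    and f'_deriv: "\<And>y. 0 < y \<Longrightarrow> (f' has_real_derivative f'' y) (at y)"
    and ode: "\<And>y. 0 < y \<Longrightarrow>
      f'' y + ((real d - 1) / y - y / 2) * f' y - (real d - 1) / (2 * y\<^sup>2) * sin (2 * f y) = 0"
begin

(* An integrating factor for the linear part: (weight f')' = weight (f'' + ((d-1)/y - y/2) f'). *)
definition weight :: "real \<Rightarrow> real"
  where "weight y = y ^ (d - 1) * exp (- (y\<^sup>2) / 4)"

definition weighted_slope :: "real \<Rightarrow> real"
  where "weighted_slope y = weight y * f' y"

definition equator_coeff :: "real \<Rightarrow> real"
  where "equator_coeff y = 1 / y\<^sup>2 - 1 / (2 * real d - 8)"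

definition equator_functional :: "real \<Rightarrow> real"
  where "equator_functional y = weight y * (f' y * equator_coeff y + 2 * (f y - pi / 2) / y ^ 3)"

lemma f''_eq: "0 < y \<Longrightarrow>
  f'' y = (real d - 1) / (2 * y\<^sup>2) * sin (2 * f y) - ((real d - 1) / y - y / 2) * f' y"
  using ode[of y] by linarith

lemma weight_pos: "0 < y \<Longrightarrow> 0 < weight y"
  by (simp add: weight_def)

lemma weight_deriv:
  assumes "0 < y"
  shows "(weight has_real_derivative weight y * ((real d - 1) / y - y / 2)) (at y)"
proof -
  obtain n where n: "d = n + 2"
    using dim by (intro that[of "d - 2"]) simp
  have n': "real d = real n + 2"
    by (simp add: n)
  have w: "weight = (\<lambda>y. y ^ Suc n * exp (- (y\<^sup>2) / 4))"
    unfolding weight_def[abs_def] by (simp add: n)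
  have "((\<lambda>y. y ^ Suc n) has_real_derivative (real n + 1) * y ^ n) (at y)"
    using DERIV_pow[of "Suc n" y] by (simp add: add.commute)
  moreover have "((\<lambda>y. exp (- (y\<^sup>2) / 4)) has_real_derivative exp (- (y\<^sup>2) / 4) * (- y / 2)) (at y)"
    by (auto intro!: derivative_eq_intros)
  ultimately have "(weight has_real_derivative
      (real n + 1) * y ^ n * exp (- (y\<^sup>2) / 4) + exp (- (y\<^sup>2) / 4) * (- y / 2) * y ^ Suc n) (at y)"
    unfolding w by (rule DERIV_mult)
  then show ?thesis
    by (rule DERIV_cong) (use assms in \<open>simp add: w n' field_simps\<close>)
qed

lemma weighted_slope_deriv:
  assumes "0 < y"
  shows "(weighted_slope has_real_derivative
    weight y * (real d - 1) / (2 * y\<^sup>2) * sin (2 * f y)) (at y)"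
  unfolding weighted_slope_def[abs_def]
  by (rule derivative_eq_intros weight_deriv f'_deriv refl assms)+
    (use assms in \<open>simp add: f''_eq field_simps\<close>)

lemma equator_coeff_deriv: "0 < y \<Longrightarrow> (equator_coeff has_real_derivative - 2 / y ^ 3) (at y)"
  unfolding equator_coeff_def[abs_def]
  by (auto intro!: derivative_eq_intros simp: field_simps power_eq_if)

lemma equator_coeff_decreasing: "0 < y \<Longrightarrow> y < x \<Longrightarrow> equator_coeff x < equator_coeff y"
  unfolding equator_coeff_def by (simp add: divide_strict_left_mono power_strict_mono)

lemma equator_coeff_neg_after: "0 < y \<Longrightarrow> equator_coeff y < 0 \<Longrightarrow> y \<le> x \<Longrightarrow> equator_coeff x < 0"
  using equator_coeff_decreasing[of y x] by (cases "x = y") auto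

lemma equator_functional_deriv:
  assumes "0 < y"
  shows "(equator_functional has_real_derivative weight y / y\<^sup>2 * equator_coeff y *
    ((2 * real d - 8) * (f y - pi / 2) - (real d - 1) / 2 * sin (2 * (f y - pi / 2)))) (at y)"
proof -
  define c where "c = 1 / (2 * real d - 8)"
  have c: "c \<noteq> 0" "real d = (1 / c + 8) / 2" "equator_coeff y = 1 / y\<^sup>2 - c"
    using dim by (auto simp: c_def equator_coeff_def)
  have "sin (2 * (f y - pi / 2)) = - sin (2 * f y)"
    using sin_minus_pi[of "2 * f y"] by (simp add: right_diff_distrib)
  then show ?thesis
    unfolding equator_functional_def[abs_def] using assms
    by (auto intro!: derivative_eq_intros weight_deriv f_deriv f'_deriv equator_coeff_deriv
        simp: f''_eq c field_simps power_eq_if)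
qed

(* The sharp use of d >= 7: it amounts to (d - 1)/2 <= d - 4. *)
lemma equator_rate_pos:
  assumes "0 < g"
  shows "0 < (2 * real d - 8) * g - (real d - 1) / 2 * sin (2 * g)"
proof -
  have "(real d - 1) / 2 * sin (2 * g) < (real d - 4) * (2 * g)"
    using dim assms by (intro scaled_sin_less) auto
  then show ?thesis
    by (simp add: algebra_simps)
qed

lemma equator_rate_neg: "g < 0 \<Longrightarrow> (2 * real d - 8) * g - (real d - 1) / 2 * sin (2 * g) < 0"
  using equator_rate_pos[of "- g"] by simp

lemma equator_functional_decreasing:
  assumes "0 < s" "s < t" "\<And>y. s < y \<Longrightarrow> y < t \<Longrightarrow> equator_coeff y * (f y - pi / 2) < 0"
  shows "equator_functional t < equator_functional s"
proof (rule DERIV_neg_imp_decreasing_open[OF assms(2)])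
  fix y assume y: "s < y" "y < t"
  define g where "g = f y - pi / 2"
  define h where "h = (2 * real d - 8) * g - (real d - 1) / 2 * sin (2 * g)"
  have "equator_coeff y * h < 0"
    using assms(3)[OF y] equator_rate_pos[of g] equator_rate_neg[of g]
    unfolding g_def[symmetric] h_def[symmetric]
    by (cases g rule: linorder_cases) (auto simp: mult_less_0_iff)
  moreover have "0 < weight y / y\<^sup>2"
    using y assms(1) weight_pos by simp
  ultimately have "weight y / y\<^sup>2 * equator_coeff y * h < 0"
    by (metis mult.assoc mult_pos_neg)
  then show "\<exists>D. (equator_functional has_real_derivative D) (at y) \<and> D < 0"
    using equator_functional_deriv[of y] y assms(1) unfolding h_def g_def by auto
next
  show "continuous_on {s..t} equator_functional"
    using assms(1) by (intro continuous_at_imp_continuous_on ballI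
        DERIV_isCont[OF equator_functional_deriv]) auto
qed

lemma weighted_slope_increasing:
  assumes "0 < s" "s < t" "\<And>y. s < y \<Longrightarrow> y < t \<Longrightarrow> 0 < f y \<and> f y < pi / 2"
  shows "weighted_slope s < weighted_slope t"
proof (rule DERIV_pos_imp_increasing_open[OF assms(2)])
  fix y assume y: "s < y" "y < t"
  have "0 < sin (2 * f y)"
    using assms(3)[OF y] by (intro sin_gt_zero) auto
  then have "0 < weight y * (real d - 1) / (2 * y\<^sup>2) * sin (2 * f y)"
    using weight_pos[of y] y assms(1) dim by simp
  then show "\<exists>D. (weighted_slope has_real_derivative D) (at y) \<and> 0 < D"
    using weighted_slope_deriv[of y] y assms(1) by auto
next
  show "continuous_on {s..t} weighted_slope"
    using assms(1) by (intro continuous_at_imp_continuous_on ballI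
        DERIV_isCont[OF weighted_slope_deriv]) auto
qed

lemma weight_over_power_tendsto_0_at_right:
  assumes "k + 1 < d"
  shows "((\<lambda>y. weight y / y ^ k) \<longlongrightarrow> 0) (at_right 0)"
proof -
  have "((\<lambda>y. y ^ (d - 1 - k) * exp (- (y\<^sup>2) / 4)) \<longlongrightarrow> 0 ^ (d - 1 - k) * exp (- (0\<^sup>2) / 4))
      (at_right (0::real))"
    by (intro tendsto_intros) auto
  then have "((\<lambda>y. y ^ (d - 1 - k) * exp (- (y\<^sup>2) / 4)) \<longlongrightarrow> 0) (at_right (0::real))"
    using assms by (simp add: power_0_left)
  moreover have "\<forall>\<^sub>F y in at_right 0. y ^ (d - 1 - k) * exp (- (y\<^sup>2) / 4) = weight y / y ^ k"
    unfolding eventually_at_right_field using assms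
    by (intro exI[of _ 1]) (auto simp: weight_def power_diff)
  ultimately show ?thesis
    by (rule Lim_transform_eventually)
qed

lemma weight_over_power_tendsto_0_at_top:
  assumes "k < d"
  shows "((\<lambda>y. weight y / y ^ k) \<longlongrightarrow> 0) at_top"
proof -
  have "((\<lambda>y::real. y ^ (d - 1 - k) * exp (- (y\<^sup>2) / 4)) \<longlongrightarrow> 0) at_top"
    by real_asymp
  moreover have "\<forall>\<^sub>F y in at_top. y ^ (d - 1 - k) * exp (- (y\<^sup>2) / 4) = weight y / y ^ k"
    using eventually_gt_at_top[of 0] by eventually_elim (use assms in \<open>simp add: weight_def power_diff\<close>)
  ultimately show ?thesis
    by (rule Lim_transform_eventually)
qed

lemma weighted_slope_tendsto_0_at_right: "(weighted_slope \<longlongrightarrow> 0) (at_right 0)"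
proof -
  have "((\<lambda>y. weight y / y ^ 0 * f' y) \<longlongrightarrow> 0 * f' 0) (at_right 0)"
    using dim by (intro tendsto_intros weight_over_power_tendsto_0_at_right
        continuous_on_halfline_tendsto_at_right cont_f') simp
  then show ?thesis
    by (simp add: weighted_slope_def[abs_def])
qed

lemma equator_functional_tendsto_0_at_right: "(equator_functional \<longlongrightarrow> 0) (at_right 0)"
proof -
  define c where "c = 1 / (2 * real d - 8)"
  have v: "equator_coeff y = 1 / y\<^sup>2 - c" for y
    by (simp add: equator_coeff_def c_def)
  have "((\<lambda>y. f' y * (weight y / y ^ 2 - c * (weight y / y ^ 0)) + (f y - pi / 2) * (2 * (weight y / y ^ 3)))
      \<longlongrightarrow> f' 0 * (0 - c * 0) + (f 0 - pi / 2) * (2 * 0)) (at_right 0)"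
    using dim by (intro tendsto_intros weight_over_power_tendsto_0_at_right
        continuous_on_halfline_tendsto_at_right cont_f cont_f') auto
  moreover have "\<forall>\<^sub>F y in at_right 0. f' y * (weight y / y ^ 2 - c * (weight y / y ^ 0))
      + (f y - pi / 2) * (2 * (weight y / y ^ 3)) = equator_functional y"
    unfolding eventually_at_right_field
    by (intro exI[of _ 1]) (auto simp: equator_functional_def v field_simps)
  ultimately show ?thesis
    by (simp add: Lim_transform_eventually)
qed

lemma equator_energy_deriv_ge:
  assumes "0 < z0" "z0 \<le> y" "y \<le> z"
  shows "- (1 + 2 * ((real d - 1) / z0 + z / 2) + (real d - 1) / z0\<^sup>2) * ((f y - pi / 2)\<^sup>2 + (f' y)\<^sup>2)
    \<le> 2 * (f y - pi / 2) * f' y + 2 * f' y * f'' y"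
proof -
  define g where "g = f y - pi / 2"
  define p where "p = f' y"
  define E where "E = g\<^sup>2 + p\<^sup>2"
  define P where "P = (real d - 1) / y - y / 2"
  define q where "q = (real d - 1) / y\<^sup>2"
  define M where "M = (real d - 1) / z0 + z / 2"
  define q0 where "q0 = (real d - 1) / z0\<^sup>2"
  have y: "0 < y"
    using assms by simp
  have "0 \<le> (g + p)\<^sup>2" "0 \<le> (\<bar>g\<bar> - \<bar>p\<bar>)\<^sup>2"
    by simp_all
  then have gp: "- (2 * g * p) \<le> E" "2 * \<bar>g\<bar> * \<bar>p\<bar> \<le> E"
    unfolding E_def power2_sum power2_diff by simp_all
  have q: "0 \<le> q" "q \<le> q0"
    unfolding q_def q0_def using dim assms
    by (auto intro!: divide_left_mono power_mono)
  have "sin (2 * f y) = - sin (2 * g)"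
    using sin_minus_pi[of "2 * f y"] by (simp add: g_def right_diff_distrib)
  then have "\<bar>sin (2 * f y)\<bar> \<le> 2 * \<bar>g\<bar>"
    using abs_sin_x_le_abs_x[of "2 * g"] by simp
  then have "\<bar>p\<bar> * \<bar>sin (2 * f y)\<bar> \<le> 2 * \<bar>g\<bar> * \<bar>p\<bar>"
    by (simp add: mult_left_mono mult.commute)
  then have "\<bar>q * p * sin (2 * f y)\<bar> \<le> q * (2 * \<bar>g\<bar> * \<bar>p\<bar>)"
    using q by (simp add: abs_mult mult_left_mono mult.assoc)
  also have "\<dots> \<le> q0 * E"
    using gp q by (intro mult_mono) auto
  finally have sin_term: "- (q * p * sin (2 * f y)) \<le> q0 * E"
    by simp
  have "\<bar>P\<bar> \<le> M"
  proof -
    have "(real d - 1) / y \<le> (real d - 1) / z0" "0 \<le> (real d - 1) / y"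
      using assms dim by (auto intro!: divide_left_mono)
    then show ?thesis
      unfolding P_def M_def abs_le_iff using assms by linarith
  qed
  have "P * p\<^sup>2 \<le> \<bar>P\<bar> * p\<^sup>2"
    by (simp add: mult_right_mono)
  also have "\<dots> \<le> M * p\<^sup>2"
    using \<open>\<bar>P\<bar> \<le> M\<close> by (simp add: mult_right_mono)
  also have "\<dots> \<le> M * E"
    unfolding E_def using \<open>\<bar>P\<bar> \<le> M\<close> by (intro mult_left_mono) auto
  finally have drift_term: "P * p\<^sup>2 \<le> M * E" .
  have "2 * g * p + 2 * p * f'' y = 2 * g * p + q * p * sin (2 * f y) - 2 * P * p\<^sup>2"
    unfolding f''_eq[OF y] P_def q_def p_def using y by (simp add: field_simps power2_eq_square)
  then show ?thesis
    using gp sin_term drift_term unfolding g_def[symmetric] p_def[symmetric] E_def[symmetric]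
      M_def[symmetric] q0_def[symmetric] by (simp add: algebra_simps)
qed

lemma equator_backward_unique:
  assumes "0 < z0" "z0 < z" "f z = pi / 2" "f' z = 0"
  shows "f z0 = pi / 2"
proof -
  let ?E = "\<lambda>y. (f y - pi / 2)\<^sup>2 + (f' y)\<^sup>2"
  have "?E z0 \<le> 0"
  proof (rule backward_gronwall_nonpos[where E = ?E and a = z0 and b = z
      and K = "1 + 2 * ((real d - 1) / z0 + z / 2) + (real d - 1) / z0\<^sup>2"])
    fix y assume "z0 \<le> y" "y \<le> z"
    then have "0 < y"
      using assms by simp
    then show "(?E has_real_derivative 2 * (f y - pi / 2) * f' y + 2 * f' y * f'' y) (at y)"
      by (auto intro!: derivative_eq_intros f_deriv f'_deriv)
  qed (use assms equator_energy_deriv_ge in auto)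
  then show ?thesis
    by (simp add: sum_power2_le_zero_iff)
qed

end

locale shrinker = shrinker_ode +
  fixes b L :: real
  assumes f_0: "f 0 = 0"
    and f_pos_near_0: "\<forall>\<^sub>F y in at_right 0. 0 < f y"
    and f_tendsto: "(f \<longlongrightarrow> b) at_top"
    and slope_tendsto: "((\<lambda>y. y ^ 3 * f' y) \<longlongrightarrow> L) at_top"
begin

lemma weighted_slope_tendsto_0_at_top: "(weighted_slope \<longlongrightarrow> 0) at_top"
proof -
  have "((\<lambda>y. (y ^ 3 * f' y) * (weight y / y ^ 3)) \<longlongrightarrow> L * 0) at_top"
    using dim by (intro tendsto_intros slope_tendsto weight_over_power_tendsto_0_at_top) auto
  moreover have "\<forall>\<^sub>F y in at_top. (y ^ 3 * f' y) * (weight y / y ^ 3) = weighted_slope y"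
    using eventually_gt_at_top[of 0] by eventually_elim (simp add: weighted_slope_def)
  ultimately show ?thesis
    by (simp add: Lim_transform_eventually)
qed

lemma equator_functional_tendsto_0_at_top: "(equator_functional \<longlongrightarrow> 0) at_top"
proof -
  define c where "c = 1 / (2 * real d - 8)"
  have v: "equator_coeff y = 1 / y\<^sup>2 - c" for y
    by (simp add: equator_coeff_def c_def)
  have "((\<lambda>y. (y ^ 3 * f' y) * (weight y / y ^ 5 - c * (weight y / y ^ 3))
      + (f y - pi / 2) * (2 * (weight y / y ^ 3))) \<longlongrightarrow> L * (0 - c * 0) + (b - pi / 2) * (2 * 0)) at_top"
    using dim by (intro tendsto_intros slope_tendsto f_tendsto weight_over_power_tendsto_0_at_top) auto
  moreover have "\<forall>\<^sub>F y in at_top. (y ^ 3 * f' y) * (weight y / y ^ 5 - c * (weight y / y ^ 3))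
      + (f y - pi / 2) * (2 * (weight y / y ^ 3)) = equator_functional y"
    using eventually_gt_at_top[of 0] by eventually_elim
      (simp add: equator_functional_def v field_simps power_eq_if)
  ultimately show ?thesis
    by (simp add: Lim_transform_eventually)
qed

lemma weighted_slope_pos:
  assumes "0 < x" "\<And>y. 0 < y \<Longrightarrow> y < x \<Longrightarrow> 0 < f y \<and> f y < pi / 2"
  shows "0 < weighted_slope x"
  using weighted_slope_tendsto_0_at_right assms(1)
proof (rule greater_than_limit_at_right_if_increasing)
  fix s t assume "0 < s" "s < t" "t \<le> x"
  then show "weighted_slope s < weighted_slope t"
    using assms(2) by (intro weighted_slope_increasing) auto
qed

lemma pos_if_below_equator:
  assumes below: "\<And>y. 0 < y \<Longrightarrow> f y < pi / 2" and "0 < t"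
  shows "0 < f t"
proof (rule ccontr)
  assume "\<not> 0 < f t"
  obtain \<delta> where "0 < \<delta>" and pos: "\<And>y. 0 < y \<Longrightarrow> y < \<delta> \<Longrightarrow> 0 < f y"
    using f_pos_near_0 unfolding eventually_at_right_field by auto
  have "\<delta> / 2 < t"
  proof (rule ccontr)
    assume "\<not> \<delta> / 2 < t"
    then show False
      using pos[OF \<open>0 < t\<close>] \<open>\<not> 0 < f t\<close> \<open>0 < \<delta>\<close> by simp
  qed
  moreover have "continuous_on {\<delta> / 2..t} (\<lambda>y. - f y)"
    using \<open>0 < \<delta>\<close> by (intro continuous_intros continuous_on_subset[OF cont_f]) auto
  moreover have "- f (\<delta> / 2) < 0"
    using pos[of "\<delta> / 2"] \<open>0 < \<delta>\<close> by simp
  ultimately obtain c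
    where c: "\<delta> / 2 < c" "- f c = 0" "\<And>y. \<delta> / 2 \<le> y \<Longrightarrow> y < c \<Longrightarrow> - f y < 0"
    using first_crossing[of "\<delta> / 2" t "\<lambda>y. - f y" 0] \<open>\<not> 0 < f t\<close> by auto
  have "0 < c"
    using c(1) \<open>0 < \<delta>\<close> by linarith
  have "0 < f y" if "0 < y" "y < c" for y
    using pos[OF \<open>0 < y\<close>] c(3)[of y] that by (cases "y < \<delta> / 2") auto
  then have "0 < weighted_slope c"
    using below \<open>0 < c\<close> by (intro weighted_slope_pos) auto
  moreover have "f' c \<le> 0"
    using c \<open>0 < \<delta>\<close>
    by (intro DERIV_nonpos_if_greater_on_left[OF f_deriv[OF \<open>0 < c\<close>], of "\<delta> / 2"]) auto
  ultimately show False
    using weight_pos[OF \<open>0 < c\<close>] by (simp add: weighted_slope_def zero_less_mult_iff)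
qed

lemma reaches_equator: "\<exists>t>0. pi / 2 \<le> f t"
proof (rule ccontr)
  assume "\<not> (\<exists>t>0. pi / 2 \<le> f t)"
  then have in_range: "0 < f y \<and> f y < pi / 2" if "0 < y" for y
    using pos_if_below_equator that by force
  then have "0 < weighted_slope 1"
    by (intro weighted_slope_pos) auto
  moreover have "weighted_slope 1 < 0"
    using weighted_slope_tendsto_0_at_top
    by (rule less_than_limit_at_top_if_increasing)
      (use in_range in \<open>auto intro!: weighted_slope_increasing\<close>)
  ultimately show False
    by simp
qed

lemma equator_functional_at_equator:
  "f y = pi / 2 \<Longrightarrow> equator_functional y = weight y * f' y * equator_coeff y"
  by (simp add: equator_functional_def)

lemma first_equator_crossing:
  assumes "0 < t" "pi / 2 \<le> f t"
  obtains y1 where "0 < y1" "f y1 = pi / 2" "\<And>x. 0 \<le> x \<Longrightarrow> x < y1 \<Longrightarrow> f x < pi / 2" "0 \<le> f' y1"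
proof -
  have "continuous_on {0..t} f"
    by (rule continuous_on_subset[OF cont_f]) auto
  then obtain y1 where y1: "0 < y1" "f y1 = pi / 2" "\<And>x. 0 \<le> x \<Longrightarrow> x < y1 \<Longrightarrow> f x < pi / 2"
    using first_crossing[of 0 t f "pi / 2"] assms f_0 by auto
  moreover have "0 \<le> f' y1"
  proof (rule DERIV_nonneg_if_less_on_left[OF f_deriv[OF \<open>0 < y1\<close>] \<open>0 < y1\<close>])
    fix x assume "0 \<le> x" "x < y1"
    then show "f x < f y1"
      using y1(2) y1(3)[of x] by linarith
  qed
  ultimately show ?thesis
    using that by blast
qed

lemma equator_coeff_neg_at_first_crossing:
  assumes "0 < y1" "f y1 = pi / 2" "\<And>x. 0 \<le> x \<Longrightarrow> x < y1 \<Longrightarrow> f x < pi / 2" "0 \<le> f' y1"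
  shows "equator_coeff y1 < 0"
proof (rule ccontr)
  assume "\<not> equator_coeff y1 < 0"
  then have coeff_pos: "0 < equator_coeff y" if "0 < y" "y < y1" for y
    using equator_coeff_decreasing[OF that] by simp
  have "- 0 < - equator_functional y1"
    using tendsto_minus[OF equator_functional_tendsto_0_at_right] \<open>0 < y1\<close>
  proof (rule greater_than_limit_at_right_if_increasing)
    fix s t assume "0 < s" "s < t" "t \<le> y1"
    then show "- equator_functional s < - equator_functional t"
      using assms(3) coeff_pos by (auto intro!: equator_functional_decreasing mult_pos_neg)
  qed
  moreover have "0 \<le> weight y1 * f' y1 * equator_coeff y1"
    using \<open>\<not> equator_coeff y1 < 0\<close> weight_pos[OF \<open>0 < y1\<close>] assms(4) by simp
  ultimately show False
    using equator_functional_at_equator[OF assms(2)] by simp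
qed

lemma stays_above_equator:
  assumes "0 < y1" "f y1 = pi / 2" "0 < f' y1" "equator_coeff y1 < 0" "y1 < x"
  shows "pi / 2 < f x"
proof (rule ccontr)
  assume "\<not> pi / 2 < f x"
  obtain e where "0 < e" and inc: "\<And>t. 0 < t \<Longrightarrow> t < e \<Longrightarrow> pi / 2 < f (y1 + t)"
    using DERIV_pos_inc_right[OF f_deriv[OF \<open>0 < y1\<close>] \<open>0 < f' y1\<close>] assms(2) by force
  define a where "a = y1 + min e (x - y1) / 2"
  have "y1 < a" "a < x" "a - y1 < e" "pi / 2 < f a"
    using \<open>0 < e\<close> assms(5) inc[of "min e (x - y1) / 2"] unfolding a_def by (auto simp: min_def field_simps)
  moreover have "continuous_on {a..x} (\<lambda>y. - f y)"
    using \<open>y1 < a\<close> assms(1) by (intro continuous_intros continuous_on_subset[OF cont_f]) auto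
  ultimately obtain q where q: "a < q" "f q = pi / 2" "\<And>y. a \<le> y \<Longrightarrow> y < q \<Longrightarrow> pi / 2 < f y"
    using first_crossing[of a x "\<lambda>y. - f y" "- pi / 2"] \<open>\<not> pi / 2 < f x\<close> by auto
  have "0 < q"
    using assms(1) \<open>y1 < a\<close> q(1) by linarith
  have above: "pi / 2 < f y" if "y1 < y" "y < q" for y
    using inc[of "y - y1"] q(3)[of y] that \<open>a - y1 < e\<close> by (cases "y < a") auto
  have coeff_neg: "equator_coeff y < 0" if "y1 \<le> y" for y
    using equator_coeff_neg_after assms(1,4) that .
  have "equator_functional q < equator_functional y1"
    using assms(1) \<open>y1 < a\<close> q(1) above coeff_neg
    by (intro equator_functional_decreasing) (auto intro!: mult_neg_pos)
  also have "\<dots> < 0"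
    using equator_functional_at_equator[OF assms(2)] weight_pos[OF assms(1)] assms(3,4)
    by (simp add: mult_pos_neg)
  finally have "equator_functional q < 0" .
  moreover have "f' q \<le> 0"
  proof (rule DERIV_nonpos_if_greater_on_left[OF f_deriv[OF \<open>0 < q\<close>] \<open>a < q\<close>])
    fix y assume "a \<le> y" "y < q"
    then show "f q < f y"
      using q(2) q(3)[of y] by linarith
  qed
  then have "0 \<le> weight q * f' q * equator_coeff q"
    using weight_pos[OF \<open>0 < q\<close>] coeff_neg[of q] \<open>y1 < a\<close> q(1)
    by (intro mult_nonpos_nonpos mult_nonneg_nonpos) auto
  ultimately show False
    using equator_functional_at_equator[OF q(2)] by simp
qed

lemma equator_functional_pos_if_above_after:
  assumes "0 < y1" "equator_coeff y1 < 0" "\<And>y. y1 < y \<Longrightarrow> pi / 2 < f y"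
  shows "0 < equator_functional y1"
proof -
  have "- equator_functional y1 < - 0"
    using tendsto_minus[OF equator_functional_tendsto_0_at_top]
  proof (rule less_than_limit_at_top_if_increasing)
    fix s t assume "y1 \<le> s" "s < t"
    have "equator_functional t < equator_functional s"
    proof (rule equator_functional_decreasing[OF _ \<open>s < t\<close>])
      show "0 < s"
        using assms(1) \<open>y1 \<le> s\<close> by linarith
      fix y assume "s < y" "y < t"
      then have "pi / 2 < f y" "equator_coeff y < 0"
        using assms(3) equator_coeff_neg_after[OF assms(1,2)] \<open>y1 \<le> s\<close> by auto
      then show "equator_coeff y * (f y - pi / 2) < 0"
        by (simp add: mult_neg_pos)
    qed
    then show "- equator_functional s < - equator_functional t"
      by simp
  qed
  then show ?thesis
    by simp
qed

lemma below_equator: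
  assumes "0 < t"
  shows "f t < pi / 2"
proof (rule ccontr)
  assume "\<not> f t < pi / 2"
  then obtain y1 where y1: "0 < y1" "f y1 = pi / 2" "\<And>x. 0 \<le> x \<Longrightarrow> x < y1 \<Longrightarrow> f x < pi / 2"
    and "0 \<le> f' y1"
    using first_equator_crossing[OF assms] by auto
  have coeff_neg: "equator_coeff y1 < 0"
    using equator_coeff_neg_at_first_crossing[OF y1 \<open>0 \<le> f' y1\<close>] .
  have "f' y1 \<noteq> 0"
  proof
    assume "f' y1 = 0"
    then have "f (y1 / 2) = pi / 2"
      using equator_backward_unique[of "y1 / 2" y1] y1 by simp
    then show False
      using y1(1) y1(3)[of "y1 / 2"] by simp
  qed
  with \<open>0 \<le> f' y1\<close> have "0 < f' y1"
    by simp
  then have "0 < equator_functional y1"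
    using stays_above_equator[OF y1(1,2) _ coeff_neg] y1(1) coeff_neg
    by (intro equator_functional_pos_if_above_after) auto
  moreover have "weight y1 * f' y1 * equator_coeff y1 < 0"
    using mult_pos_pos[OF weight_pos[OF y1(1)] \<open>0 < f' y1\<close>] coeff_neg by (rule mult_pos_neg)
  ultimately show False
    using equator_functional_at_equator[OF y1(2)] by simp
qed

lemma no_solution: False
  using reaches_equator below_equator by force

end

lemma no_smooth_shrinker:
  fixes f :: "real \<Rightarrow> real"
  assumes "7 \<le> d" "smooth_on_halfline f"
    and ode: "\<And>y. 0 < y \<Longrightarrow> deriv (deriv f) y + ((real d - 1) / y - y / 2) * deriv f y
      - (real d - 1) / (2 * y\<^sup>2) * sin (2 * f y) = 0"
    and "f 0 = 0" "0 < a" "(f has_real_derivative a) (at_right 0)"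
    and "(f \<longlongrightarrow> b) at_top" "((\<lambda>y. y ^ 3 * deriv f y) \<longlongrightarrow> L) at_top"
  shows False
proof -
  obtain f' f'' where derivs: "continuous_on {0..} f" "continuous_on {0..} f'"
    "\<And>y. 0 < y \<Longrightarrow> (f has_real_derivative f' y) (at y)"
    "\<And>y. 0 < y \<Longrightarrow> (f' has_real_derivative f'' y) (at y)"
    and deriv_eq: "\<And>y. 0 < y \<Longrightarrow> deriv f y = f' y" "\<And>y. 0 < y \<Longrightarrow> deriv (deriv f) y = f'' y"
    using smooth_on_halfline_derivatives[OF \<open>smooth_on_halfline f\<close>] by blast
  have "\<forall>\<^sub>F y in at_right 0. 0 < f y"
    using eventually_greater_at_right_if_pos_derivative[OF assms(6,5)] \<open>f 0 = 0\<close> by simp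
  moreover have "((\<lambda>y. y ^ 3 * f' y) \<longlongrightarrow> L) at_top"
    using assms(8) eventually_gt_at_top[of 0]
    by (rule Lim_transform_eventually[OF _ eventually_mono]) (simp add: deriv_eq)
  ultimately interpret shrinker d f f' f'' b L
    using assms derivs by unfold_locales (auto simp flip: deriv_eq)
  show False
    by (rule no_solution)
qed

theorem theorem1:
  fixes d :: nat
  assumes "d \<ge> 7"
  shows "\<not> (\<exists>f :: real \<Rightarrow> real. smooth_on_halfline f \<and>
     (\<forall>y>0. deriv (deriv f) y + ((real d - 1) / y - y / 2) * deriv f y
              - (real d - 1) / (2 * y\<^sup>2) * sin (2 * f y) = 0) \<and>
     f 0 = 0 \<and>
     (\<exists>a>0. (f has_real_derivative a) (at_right 0)) \<and>
     (\<exists>b::real. (f \<longlongrightarrow> b) at_top \<and>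
        ((\<lambda>y. y ^ 3 * deriv f y) \<longlongrightarrow> - (real d - 1) * sin (2 * b)) at_top))"
  using no_smooth_shrinker[OF assms] by blast

end
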